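(* For any SETAF $S=(A,X)$ it holds that $\sigma(S) = \sigma(D_S)$ for every $\sigma \in \{\mathrm{adm},\mathrm{com},\mathrm{prf},\mathrm{mod}\}$.
   Context: Let $A$ be a fixed finite set of statements. An interpretation is a mapping $v:A\to\{\mathbf{t},\mathbf{f},\mathbf{u}\}$; it is two-valued if it never assigns $\mathbf{u}$. The information ordering is $\mathbf{u}<_i\mathbf{t}$, $\mathbf{u}<_i\mathbf{f}$ (no other strict pairs), extended pointwise to interpretations. The consensus meet $\sqcap_i$ of truth values gives $\mathbf{t}\sqcap_i\mathbf{t}=\mathbf{t}$, $\mathbf{f}\sqcap_i\mathbf{f}=\mathbf{f}$, and $\mathbf{u}$ otherwise; the consensus of a nonempty set of truth values is their greatest lower bound with respect to $\leq_i$. For an interpretation $v$, $[v]_2$ denotes the set of all two-valued interpretations $w$ with $v\leq_i w$. An ADF is $D=(A,L,C)$ where $L\subseteq A\times A$ and each statement $a$ has an acceptance condition given by a propositional formula $\varphi_a$ over its parents. The operator $\Gamma_D$ maps an interpretation $v$ to the interpretation assigning to each $a$ the consensus (greatest lower bound w.r.t. $\leq_i$) of $\{w(\varphi_a) \mid w\in[v]_2\}$. For an ADF $D$, $v$ is admissible iff $v\leq_i\Gamma_D(v)$; complete iff $\Gamma_D(v)=v$; preferred iff it is $\leq_i$-maximal admissible; a two-valued model iff it is two-valued and $\Gamma_D(v)=v$. These sets are denoted $\mathrm{adm}(D),\mathrm{com}(D),\mathrm{prf}(D),\mathrm{mod}(D)$. A SETAF is a pair $S=(A,X)$ with $X\subseteq(2^A\setminus\{\emptyset\})\times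 A$. For a statement $a$ and interpretation $v$: $a$ is acceptable wrt. $v$ if for all $(B,a)\in X$ there is $a'\in B$ with $v(a')=\mathbf{f}$; $a$ is unacceptable wrt. $v$ if there is $(B,a)\in X$ with $v(a')=\mathbf{t}$ for all $a'\in B$. Then: $v\in\mathrm{adm}(S)$ iff for all $a$, $v(a)=\mathbf{t}$ implies $a$ acceptable and $v(a)=\mathbf{f}$ implies $a$ unacceptable wrt. $v$; $v\in\mathrm{com}(S)$ iff for all $a$, $a$ is acceptable wrt. $v$ iff $v(a)=\mathbf{t}$, and $a$ is unacceptable wrt. $v$ iff $v(a)=\mathbf{f}$; $v\in\mathrm{prf}(S)$ iff $v$ is $\leq_i$-maximal admissible; $v\in\mathrm{mod}(S)$ iff $v\in\mathrm{adm}(S)$ and $v$ assigns $\mathbf{u}$ to no statement. The ADF $D_S$ corresponding to $S$ has acceptance formula $\varphi_a=\bigwedge_{(B,a)\in X}\bigvee_{a'\in B}\neg a'$ for each $a\in A$. *)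

theory Defs
  imports Main "HOL-Library.FSet"
begin

text \<open>The fixed finite set of statements A is the universe of a finite type 'a.\<close>

datatype tv = T | F | U

definition info_le :: "tv \<Rightarrow> tv \<Rightarrow> bool" where
  "info_le x y \<longleftrightarrow> x = y \<or> x = U"

definition info_le_int :: "('a \<Rightarrow> tv) \<Rightarrow> ('a \<Rightarrow> tv) \<Rightarrow> bool" where
  "info_le_int v w \<longleftrightarrow> (\<forall>a. info_le (v a) (w a))"

definition two_valued :: "('a \<Rightarrow> tv) \<Rightarrow> bool" where
  "two_valued v \<longleftrightarrow> (\<forall>a. v a \<noteq> U)"

text \<open>Consensus (greatest lower bound w.r.t. the information order) of a nonempty set.\<close>
definition consensus :: "tv set \<Rightarrow> tv" where
  "consensus S = (if S = {T} then T else if S = {F} then F else U)"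

definition tv_of :: "bool \<Rightarrow> tv" where
  "tv_of b = (if b then T else F)"

definition completions :: "('a \<Rightarrow> tv) \<Rightarrow> ('a \<Rightarrow> tv) set" where
  "completions v = {w. two_valued w \<and> info_le_int v w}"

datatype 'a form = Atom 'a | Neg "'a form" | Conj "'a form fset" | Disj "'a form fset"

primrec eval :: "('a \<Rightarrow> tv) \<Rightarrow> 'a form \<Rightarrow> bool" where
  "eval w (Atom a) = (w a = T)"
| "eval w (Neg \<phi>) = (\<not> eval w \<phi>)"
| "eval w (Conj S) = (\<forall>b\<in>fset (fimage (eval w) S). b)"
| "eval w (Disj S) = (\<exists>b\<in>fset (fimage (eval w) S). b)"

text \<open>An ADF D = (A, L, C): A is UNIV, links L, and acceptance formulas.\<close>
type_synonym 'a adf = "('a \<times> 'a) set \<times> ('a \<Rightarrow> 'a form)"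

definition Gamma :: "'a adf \<Rightarrow> ('a \<Rightarrow> tv) \<Rightarrow> ('a \<Rightarrow> tv)" where
  "Gamma D v = (\<lambda>a. consensus {tv_of (eval w (snd D a)) | w. w \<in> completions v})"

definition adf_adm :: "'a adf \<Rightarrow> ('a \<Rightarrow> tv) set" where
  "adf_adm D = {v. info_le_int v (Gamma D v)}"

definition adf_com :: "'a adf \<Rightarrow> ('a \<Rightarrow> tv) set" where
  "adf_com D = {v. Gamma D v = v}"

definition adf_prf :: "'a adf \<Rightarrow> ('a \<Rightarrow> tv) set" where
  "adf_prf D = {v. v \<in> adf_adm D \<and>
      (\<forall>v'\<in>adf_adm D. info_le_int v v' \<longrightarrow> v' = v)}"

definition adf_mod :: "'a adf \<Rightarrow> ('a \<Rightarrow> tv) set" where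
  "adf_mod D = {v. two_valued v \<and> Gamma D v = v}"

text \<open>A SETAF (A, X) with A = UNIV; X is a set of attacks (B, a) with B nonempty.\<close>
definition wf_setaf :: "('a set \<times> 'a) set \<Rightarrow> bool" where
  "wf_setaf X \<longleftrightarrow> (\<forall>(B, a)\<in>X. B \<noteq> {})"

definition acceptable :: "('a set \<times> 'a) set \<Rightarrow> ('a \<Rightarrow> tv) \<Rightarrow> 'a \<Rightarrow> bool" where
  "acceptable X v a \<longleftrightarrow> (\<forall>B. (B, a) \<in> X \<longrightarrow> (\<exists>a'\<in>B. v a' = F))"

definition unacceptable :: "('a set \<times> 'a) set \<Rightarrow> ('a \<Rightarrow> tv) \<Rightarrow> 'a \<Rightarrow> bool" where
  "unacceptable X v a \<longleftrightarrow> (\<exists>B. (B, a) \<in> X \<and> (\<forall>a'\<in>B. v a' = T))"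

definition setaf_adm :: "('a set \<times> 'a) set \<Rightarrow> ('a \<Rightarrow> tv) set" where
  "setaf_adm X = {v. \<forall>a. (v a = T \<longrightarrow> acceptable X v a) \<and> (v a = F \<longrightarrow> unacceptable X v a)}"

definition setaf_com :: "('a set \<times> 'a) set \<Rightarrow> ('a \<Rightarrow> tv) set" where
  "setaf_com X = {v. \<forall>a. (acceptable X v a \<longleftrightarrow> v a = T) \<and> (unacceptable X v a \<longleftrightarrow> v a = F)}"

definition setaf_prf :: "('a set \<times> 'a) set \<Rightarrow> ('a \<Rightarrow> tv) set" where
  "setaf_prf X = {v. v \<in> setaf_adm X \<and>
      (\<forall>v'\<in>setaf_adm X. info_le_int v v' \<longrightarrow> v' = v)}"

definition setaf_mod :: "('a set \<times> 'a) set \<Rightarrow> ('a \<Rightarrow> tv) set" where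
  "setaf_mod X = {v. v \<in> setaf_adm X \<and> two_valued v}"

text \<open>The ADF D_S associated with a SETAF: phi_a = AND_{(B,a) in X} OR_{a' in B} not a'.\<close>
definition setaf_adf :: "('a::finite set \<times> 'a) set \<Rightarrow> 'a adf" where
  "setaf_adf X =
     ({(b, a). \<exists>B. (B, a) \<in> X \<and> b \<in> B},
      (\<lambda>a. Conj (Abs_fset ((\<lambda>B. Disj (Abs_fset ((\<lambda>b. Neg (Atom b)) ` B)))
                              ` {B. (B, a) \<in> X}))))"

end

theory Submission
  imports Defs
begin

text \<open>The acceptance formula of an argument in \<open>D\<^sub>S\<close> is true in a two-valued interpretation
  exactly when every attack on the argument contains a false attacker; so for a
  three-valued \<open>v\<close> it is true in all completions iff \<open>a\<close> is acceptable, and false in all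
  completions iff \<open>a\<close> is unacceptable. Hence \<open>\<Gamma>\<^bsub>D\<^sub>S\<^esub>\<close> coincides with the characteristic
  operator of the SETAF, and all four semantics, being defined from it in the same way,
  agree. Completing the undecided arguments uniformly to true, resp. false, gives the
  witnesses for the converse directions.\<close>

definition fill_undec :: "tv \<Rightarrow> ('a \<Rightarrow> tv) \<Rightarrow> 'a \<Rightarrow> tv" where
  "fill_undec c v = (\<lambda>b. if v b = U then c else v b)"

lemma fill_undec_in_completions: "c \<noteq> U \<Longrightarrow> fill_undec c v \<in> completions v"
  unfolding fill_undec_def completions_def two_valued_def info_le_int_def info_le_def by auto

lemma completion_eq_if_decided:
  assumes "w \<in> completions v" and "v b \<noteq> U"
  shows "w b = v b"
proof -
  have "info_le (v b) (w b)"
    using assms(1) unfolding completions_def info_le_int_def by simp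
  with assms(2) show ?thesis
    unfolding info_le_def by simp
qed

lemma Gamma_eq_if:
  "Gamma D v a =
     (if \<forall>w\<in>completions v. eval w (snd D a) then T
      else if \<forall>w\<in>completions v. \<not> eval w (snd D a) then F else U)"
proof -
  have "completions v \<noteq> {}"
    using fill_undec_in_completions[of T v] by auto
  then show ?thesis
    unfolding Gamma_def consensus_def by (auto simp: tv_of_def)
qed

lemma adf_mod_eq_two_valued_adm: "adf_mod D = {v \<in> adf_adm D. two_valued v}"
proof -
  have "Gamma D v = v \<longleftrightarrow> info_le_int v (Gamma D v)" if "two_valued v" for v
    using that unfolding two_valued_def info_le_int_def info_le_def by auto
  then show ?thesis
    unfolding adf_mod_def adf_adm_def by blast
qed

definition setaf_Gamma :: "('a set \<times> 'a) set \<Rightarrow> ('a \<Rightarrow> tv) \<Rightarrow> 'a \<Rightarrow> tv" where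
  "setaf_Gamma X v a =
     (if acceptable X v a then T else if unacceptable X v a then F else U)"

lemma not_acceptable_and_unacceptable: "acceptable X v a \<Longrightarrow> \<not> unacceptable X v a"
  unfolding acceptable_def unacceptable_def by fastforce

lemma info_le_setaf_Gamma_iff:
  "info_le (v a) (setaf_Gamma X v a) \<longleftrightarrow>
     (v a = T \<longrightarrow> acceptable X v a) \<and> (v a = F \<longrightarrow> unacceptable X v a)"
  using not_acceptable_and_unacceptable[of X v a]
  unfolding info_le_def setaf_Gamma_def by (cases "v a") auto

lemma setaf_Gamma_fixed_iff:
  "setaf_Gamma X v a = v a \<longleftrightarrow>
     (acceptable X v a \<longleftrightarrow> v a = T) \<and> (unacceptable X v a \<longleftrightarrow> v a = F)"
  using not_acceptable_and_unacceptable[of X v a]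
  unfolding setaf_Gamma_def by (cases "v a") auto

lemma eval_setaf_adf:
  fixes X :: "('a::finite set \<times> 'a) set"
  shows "eval w (snd (setaf_adf X) a) \<longleftrightarrow> (\<forall>B. (B, a) \<in> X \<longrightarrow> (\<exists>b\<in>B. w b \<noteq> T))"
  unfolding setaf_adf_def by (auto simp: Abs_fset_inverse fimage.rep_eq)

lemma acceptable_iff_eval_completions:
  fixes X :: "('a::finite set \<times> 'a) set"
  shows "acceptable X v a \<longleftrightarrow> (\<forall>w\<in>completions v. eval w (snd (setaf_adf X) a))"
proof
  assume acc: "acceptable X v a"
  show "\<forall>w\<in>completions v. eval w (snd (setaf_adf X) a)"
    unfolding eval_setaf_adf
  proof (intro ballI allI impI)
    fix w B assume "w \<in> completions v" "(B, a) \<in> X"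
    moreover obtain b where "b \<in> B" "v b = F"
      using acc \<open>(B, a) \<in> X\<close> unfolding acceptable_def by blast
    ultimately have "w b = F"
      using completion_eq_if_decided[of w v b] by simp
    with \<open>b \<in> B\<close> show "\<exists>b\<in>B. w b \<noteq> T" by force
  qed
next
  assume all: "\<forall>w\<in>completions v. eval w (snd (setaf_adf X) a)"
  show "acceptable X v a"
    unfolding acceptable_def
  proof (intro allI impI)
    fix B assume "(B, a) \<in> X"
    moreover have "eval (fill_undec T v) (snd (setaf_adf X) a)"
      using all fill_undec_in_completions[of T v] by simp
    ultimately obtain b where "b \<in> B" "fill_undec T v b \<noteq> T"
      unfolding eval_setaf_adf by blast
    then show "\<exists>b\<in>B. v b = F"
      unfolding fill_undec_def by (cases "v b") auto
  qed
qed

lemma unacceptable_iff_not_eval_completions: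
  fixes X :: "('a::finite set \<times> 'a) set"
  shows "unacceptable X v a \<longleftrightarrow> (\<forall>w\<in>completions v. \<not> eval w (snd (setaf_adf X) a))"
proof
  assume "unacceptable X v a"
  then obtain B where "(B, a) \<in> X" "\<forall>b\<in>B. v b = T"
    unfolding unacceptable_def by blast
  then show "\<forall>w\<in>completions v. \<not> eval w (snd (setaf_adf X) a)"
    unfolding eval_setaf_adf using completion_eq_if_decided by fastforce
next
  assume "\<forall>w\<in>completions v. \<not> eval w (snd (setaf_adf X) a)"
  then have "\<not> eval (fill_undec F v) (snd (setaf_adf X) a)"
    using fill_undec_in_completions[of F v] by simp
  then obtain B where "(B, a) \<in> X" "\<forall>b\<in>B. fill_undec F v b = T"
    unfolding eval_setaf_adf by blast
  then show "unacceptable X v a"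
    unfolding unacceptable_def fill_undec_def by (auto split: if_splits)
qed

lemma Gamma_setaf_adf:
  fixes X :: "('a::finite set \<times> 'a) set"
  shows "Gamma (setaf_adf X) v = setaf_Gamma X v"
  unfolding Gamma_eq_if setaf_Gamma_def
    acceptable_iff_eval_completions unacceptable_iff_not_eval_completions ..

theorem proposition1:
  fixes X :: "('a::finite set \<times> 'a) set"
  assumes "wf_setaf X"
  shows "setaf_adm X = adf_adm (setaf_adf X)
       \<and> setaf_com X = adf_com (setaf_adf X)
       \<and> setaf_prf X = adf_prf (setaf_adf X)
       \<and> setaf_mod X = adf_mod (setaf_adf X)"
proof -
  have adm: "setaf_adm X = adf_adm (setaf_adf X)"
    unfolding setaf_adm_def adf_adm_def Gamma_setaf_adf info_le_int_def
      info_le_setaf_Gamma_iff ..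
  moreover have "setaf_com X = adf_com (setaf_adf X)"
    unfolding setaf_com_def adf_com_def Gamma_setaf_adf fun_eq_iff setaf_Gamma_fixed_iff ..
  moreover have "setaf_prf X = adf_prf (setaf_adf X)"
    unfolding setaf_prf_def adf_prf_def adm ..
  moreover have "setaf_mod X = adf_mod (setaf_adf X)"
    unfolding setaf_mod_def adf_mod_eq_two_valued_adm adm ..
  ultimately show ?thesis by blast
qed

end
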